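(* Let $\mathbb{C}[T_0,\dots,T_r]$ carry the $\mathbb{Z}$-grading $\deg T_i=w_i\in\mathbb{Z}_{>0}$, let $f_1,\dots,f_s\in\mathbb{C}[T_0,\dots,T_r]$ be homogeneous polynomials, let $n_0,\dots,n_r>0$, $m\ge0$ be integers, $n=n_0+\dots+n_r$, let $l_i=(l_{i1},\dots,l_{in_i})$ be tuples of positive integers, and set $$g_i:=f_i(T_0^{l_0},\dots,T_r^{l_r})\in\mathbb{C}[T_{ij},S_k],\qquad T_i^{l_i}:=T_{i1}^{l_{i1}}\cdots T_{in_i}^{l_{in_i}},$$ where $\mathbb{C}[T_{ij},S_k]$ is the polynomial ring in $T_{ij}$ ($0\le i\le r$, $1\le j\le n_i$) and $S_1,\dots,S_m$. Then the affine variety $V(g_1,\dots,g_s)\subseteq\mathbb{C}^{n+m}$ is connected. *)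

theory Defs
  imports "HOL-Analysis.Analysis" "HOL-Library.Poly_Mapping"
begin

text \<open>Multivariate polynomials over the complex numbers in the variables T_0, T_1, ...
  are represented as finitely supported maps from exponent vectors (finitely supported
  maps nat to nat) to coefficients.\<close>
type_synonym cmpoly = "(nat \<Rightarrow>\<^sub>0 nat) \<Rightarrow>\<^sub>0 complex"

definition mpoly_eval :: "cmpoly \<Rightarrow> (nat \<Rightarrow> complex) \<Rightarrow> complex" where
  "mpoly_eval p x = (\<Sum>a\<in>Poly_Mapping.keys p. Poly_Mapping.lookup p a * (\<Prod>i\<in>Poly_Mapping.keys (a::nat \<Rightarrow>\<^sub>0 nat). x i ^ Poly_Mapping.lookup a i))"

definition mpoly_in_vars :: "nat \<Rightarrow> cmpoly \<Rightarrow> bool" where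
  "mpoly_in_vars r p \<longleftrightarrow> (\<forall>a\<in>Poly_Mapping.keys p. Poly_Mapping.keys a \<subseteq> {0..r})"

definition weighted_homogeneous :: "(nat \<Rightarrow> nat) \<Rightarrow> cmpoly \<Rightarrow> bool" where
  "weighted_homogeneous w p \<longleftrightarrow>
     (\<exists>d. \<forall>a\<in>Poly_Mapping.keys p. (\<Sum>i\<in>Poly_Mapping.keys a. w i * Poly_Mapping.lookup a i) = d)"

text \<open>Points of C^(n+m): coordinates Inl (i,j) for T_ij (i \<le> r, 1 \<le> j \<le> n i) and
  Inr k for S_k (1 \<le> k \<le> m); all other coordinates are fixed to 0.\<close>
definition coord_vars :: "nat \<Rightarrow> (nat \<Rightarrow> nat) \<Rightarrow> nat \<Rightarrow> (nat \<times> nat + nat) set" where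
  "coord_vars r n m = Inl ` {(i,j). i \<le> r \<and> 1 \<le> j \<and> j \<le> n i} \<union> Inr ` {1..m}"

definition subst_eval :: "cmpoly \<Rightarrow> (nat \<Rightarrow> nat) \<Rightarrow> (nat \<Rightarrow> nat \<Rightarrow> nat)
    \<Rightarrow> (nat \<times> nat + nat \<Rightarrow> complex) \<Rightarrow> complex" where
  "subst_eval p n l x = mpoly_eval p (\<lambda>i. \<Prod>j=1..n i. x (Inl (i,j)) ^ l i j)"

definition zero_set :: "nat \<Rightarrow> (nat \<Rightarrow> nat) \<Rightarrow> nat \<Rightarrow> (nat \<Rightarrow> nat \<Rightarrow> nat) \<Rightarrow> nat
    \<Rightarrow> (nat \<Rightarrow> cmpoly) \<Rightarrow> (nat \<times> nat + nat \<Rightarrow> complex) set" where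
  "zero_set r n m l s f =
     {x. (\<forall>v. v \<notin> coord_vars r n m \<longrightarrow> x v = 0) \<and> (\<forall>k\<in>{1..s}. subst_eval (f k) n l x = 0)}"

end

theory Submission
  imports Defs
begin

text \<open>For c \<in> [0,1] rescale every T_ij by c^(w_i / (n_i l_ij)) and every S_k by c. This multiplies
  T_i^{l_i} by c^{w_i}, so by weighted homogeneity each g_k gets multiplied by a power of c and the
  zero set is preserved. Letting c run from 0 to 1 gives a path inside the zero set from the origin
  to any of its points; hence the zero set is path connected.\<close>

lemma prod_powr_power_eq:
  fixes c :: real and W :: nat and e :: "'a \<Rightarrow> nat"
  assumes "finite A" "A \<noteq> {}" "\<forall>j\<in>A. e j > 0" "c \<ge> 0" "W > 0"
  shows "(\<Prod>j\<in>A. (c powr (W / (card A * e j))) ^ e j) = c ^ W"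
proof (cases "c = 0")
  case True
  obtain j0 where "j0 \<in> A" using assms(2) by blast
  then have "(\<Prod>j\<in>A. (c powr (W / (card A * e j))) ^ e j) = 0"
    using True assms(1,3) by (intro prod_zero bexI[of _ j0]) auto
  then show ?thesis using True assms(5) by simp
next
  case False
  then have "c > 0" using assms(4) by simp
  have "(c powr (W / (card A * e j))) ^ e j = c powr (W / card A)" if "j \<in> A" for j
    using \<open>c > 0\<close> assms(3) that by (simp add: powr_realpow [symmetric] powr_powr)
  then have "(\<Prod>j\<in>A. (c powr (W / (card A * e j))) ^ e j) = (c powr (W / card A)) ^ card A"
    by simp
  also have "\<dots> = c ^ W"
    using \<open>c > 0\<close> assms(1,2) by (simp add: powr_realpow [symmetric] powr_powr)
  finally show ?thesis .
qed

lemma mpoly_eval_weighted_scale: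
  fixes p :: cmpoly
  assumes "mpoly_in_vars r p"
    and "\<forall>a\<in>Poly_Mapping.keys p. (\<Sum>i\<in>Poly_Mapping.keys a. w i * Poly_Mapping.lookup a i) = d"
    and "\<forall>i\<le>r. z i = C ^ w i * y i"
  shows "mpoly_eval p z = C ^ d * mpoly_eval p y"
  unfolding mpoly_eval_def sum_distrib_left
proof (rule sum.cong [OF refl])
  fix a assume a: "a \<in> Poly_Mapping.keys p"
  then have "Poly_Mapping.keys a \<subseteq> {0..r}"
    using assms(1) unfolding mpoly_in_vars_def by blast
  then have "(\<Prod>i\<in>Poly_Mapping.keys a. z i ^ Poly_Mapping.lookup a i)
      = (\<Prod>i\<in>Poly_Mapping.keys a. C ^ (w i * Poly_Mapping.lookup a i) * y i ^ Poly_Mapping.lookup a i)"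
    using assms(3) by (intro prod.cong) (auto simp: power_mult_distrib power_mult)
  also have "\<dots> = C ^ (\<Sum>i\<in>Poly_Mapping.keys a. w i * Poly_Mapping.lookup a i)
      * (\<Prod>i\<in>Poly_Mapping.keys a. y i ^ Poly_Mapping.lookup a i)"
    by (simp add: prod.distrib power_sum)
  also have "\<dots> = C ^ d * (\<Prod>i\<in>Poly_Mapping.keys a. y i ^ Poly_Mapping.lookup a i)"
    using assms(2) a by simp
  finally show "Poly_Mapping.lookup p a * (\<Prod>i\<in>Poly_Mapping.keys a. z i ^ Poly_Mapping.lookup a i)
      = C ^ d * (Poly_Mapping.lookup p a * (\<Prod>i\<in>Poly_Mapping.keys a. y i ^ Poly_Mapping.lookup a i))"
    by simp
qed

lemma mpoly_eval_weighted_scale_eq_0: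
  assumes "mpoly_in_vars r p" "weighted_homogeneous w p"
    and "mpoly_eval p y = 0" "\<forall>i\<le>r. z i = C ^ w i * y i"
  shows "mpoly_eval p z = 0"
proof -
  obtain d where d: "\<forall>a\<in>Poly_Mapping.keys p. (\<Sum>i\<in>Poly_Mapping.keys a. w i * Poly_Mapping.lookup a i) = d"
    using assms(2) unfolding weighted_homogeneous_def by blast
  with assms(3) show ?thesis
    using mpoly_eval_weighted_scale [OF assms(1) d assms(4)] by simp
qed

definition coord_scaling ::
    "('v \<Rightarrow> real) \<Rightarrow> ('v \<Rightarrow> 'a::real_normed_vector) \<Rightarrow> real \<Rightarrow> 'v \<Rightarrow> 'a" where
  "coord_scaling e x c v = (c powr e v) *\<^sub>R x v"

lemma
  assumes "\<And>v. x v \<noteq> 0 \<Longrightarrow> e v > 0"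
  shows path_coord_scaling: "path (coord_scaling e x)"
    and pathstart_coord_scaling: "pathstart (coord_scaling e x) = (\<lambda>_. 0)"
    and pathfinish_coord_scaling: "pathfinish (coord_scaling e x) = x"
proof -
  have "continuous_on {0..1} (\<lambda>c. coord_scaling e x c v)" for v
  proof (cases "x v = 0")
    case False
    then have "e v > 0" by (rule assms)
    then have "continuous_on {0..1} (\<lambda>c::real. c powr e v)"
      by (intro continuous_on_powr') (auto intro: continuous_intros)
    then show ?thesis
      unfolding coord_scaling_def by (intro continuous_on_scaleR continuous_on_const)
  qed (simp add: coord_scaling_def)
  then show "path (coord_scaling e x)"
    unfolding path_def by (rule continuous_on_coordinatewise_then_product)
next
  show "pathstart (coord_scaling e x) = (\<lambda>_. 0)"
    by (rule ext) (simp add: pathstart_def coord_scaling_def)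
next
  show "pathfinish (coord_scaling e x) = x"
    by (rule ext) (simp add: pathfinish_def coord_scaling_def)
qed

definition scaling_exponent ::
    "(nat \<Rightarrow> nat) \<Rightarrow> (nat \<Rightarrow> nat) \<Rightarrow> (nat \<Rightarrow> nat \<Rightarrow> nat) \<Rightarrow> nat \<times> nat + nat \<Rightarrow> real" where
  "scaling_exponent w n l v = (case v of Inl (i, j) \<Rightarrow> w i / (n i * l i j) | Inr _ \<Rightarrow> 1)"

lemma scaling_exponent_pos:
  assumes "\<forall>i\<le>r. w i > 0" "\<forall>i\<le>r. n i > 0" "\<forall>i\<le>r. \<forall>j\<in>{1..n i}. l i j > 0"
    and "v \<in> coord_vars r n m"
  shows "scaling_exponent w n l v > 0"
  using assms by (auto simp: coord_vars_def scaling_exponent_def)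

lemma prod_coord_scaling_monomial:
  fixes x :: "nat \<times> nat + nat \<Rightarrow> complex"
  assumes "w i > 0" "n i > 0" "\<forall>j\<in>{1..n i}. l i j > 0" "c \<ge> 0"
  shows "(\<Prod>j=1..n i. coord_scaling (scaling_exponent w n l) x c (Inl (i, j)) ^ l i j)
    = of_real c ^ w i * (\<Prod>j=1..n i. x (Inl (i, j)) ^ l i j)"
proof -
  have "(\<Prod>j=1..n i. coord_scaling (scaling_exponent w n l) x c (Inl (i, j)) ^ l i j)
      = of_real (\<Prod>j=1..n i. (c powr (w i / (n i * l i j))) ^ l i j)
        * (\<Prod>j=1..n i. x (Inl (i, j)) ^ l i j)"
    by (simp add: coord_scaling_def scaling_exponent_def scaleR_conv_of_real
        power_mult_distrib prod.distrib)
  also have "(\<Prod>j=1..n i. (c powr (w i / (n i * l i j))) ^ l i j) = c ^ w i"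
    using prod_powr_power_eq [of "{1..n i}" "l i" c "w i"] assms by simp
  finally show ?thesis by simp
qed

lemma coord_scaling_mem_zero_set:
  assumes "\<forall>i\<le>r. w i > 0"
    and "\<forall>k\<in>{1..s}. mpoly_in_vars r (f k) \<and> weighted_homogeneous w (f k)"
    and "\<forall>i\<le>r. n i > 0"
    and "\<forall>i\<le>r. \<forall>j\<in>{1..n i}. l i j > 0"
    and x: "x \<in> zero_set r n m l s f" and "c \<ge> 0"
  shows "coord_scaling (scaling_exponent w n l) x c \<in> zero_set r n m l s f"
proof -
  let ?y = "coord_scaling (scaling_exponent w n l) x c"
  have monomials: "\<forall>i\<le>r. (\<Prod>j=1..n i. ?y (Inl (i, j)) ^ l i j)
      = of_real c ^ w i * (\<Prod>j=1..n i. x (Inl (i, j)) ^ l i j)"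
  proof (intro allI impI)
    fix i assume "i \<le> r"
    then show "(\<Prod>j=1..n i. ?y (Inl (i, j)) ^ l i j)
        = of_real c ^ w i * (\<Prod>j=1..n i. x (Inl (i, j)) ^ l i j)"
      using assms(1,3,4,6) by (intro prod_coord_scaling_monomial) auto
  qed
  have "subst_eval (f k) n l ?y = 0" if k: "k \<in> {1..s}" for k
  proof -
    have "subst_eval (f k) n l x = 0"
      using x k by (simp add: zero_set_def)
    then show ?thesis
      using assms(2) k monomials unfolding subst_eval_def
      by (blast intro: mpoly_eval_weighted_scale_eq_0)
  qed
  moreover have "?y v = 0" if "v \<notin> coord_vars r n m" for v
    using x that by (simp add: zero_set_def coord_scaling_def)
  ultimately show ?thesis by (simp add: zero_set_def)
qed

lemma path_component_zero_set_origin: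
  assumes "\<forall>i\<le>r. w i > 0"
    and "\<forall>k\<in>{1..s}. mpoly_in_vars r (f k) \<and> weighted_homogeneous w (f k)"
    and "\<forall>i\<le>r. n i > 0"
    and "\<forall>i\<le>r. \<forall>j\<in>{1..n i}. l i j > 0"
    and x: "x \<in> zero_set r n m l s f"
  shows "path_component (zero_set r n m l s f) (\<lambda>_. 0) x"
proof -
  have "scaling_exponent w n l v > 0" if "x v \<noteq> 0" for v
    using x that assms(1,3,4) by (intro scaling_exponent_pos) (auto simp: zero_set_def)
  moreover have "path_image (coord_scaling (scaling_exponent w n l) x) \<subseteq> zero_set r n m l s f"
    using assms by (auto simp: path_image_def intro: coord_scaling_mem_zero_set)
  ultimately show ?thesis
    unfolding path_component_def
    by (metis path_coord_scaling pathstart_coord_scaling pathfinish_coord_scaling)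
qed

theorem lemma3p8:
  fixes r s m :: nat and w n :: "nat \<Rightarrow> nat" and l :: "nat \<Rightarrow> nat \<Rightarrow> nat"
    and f :: "nat \<Rightarrow> cmpoly"
  assumes "\<forall>i\<le>r. w i > 0"
    and "\<forall>k\<in>{1..s}. mpoly_in_vars r (f k) \<and> weighted_homogeneous w (f k)"
    and "\<forall>i\<le>r. n i > 0"
    and "\<forall>i\<le>r. \<forall>j\<in>{1..n i}. l i j > 0"
  shows "connected (zero_set r n m l s f)"
proof -
  have "path_connected (zero_set r n m l s f)"
    unfolding path_connected_component
    using path_component_zero_set_origin [OF assms] path_component_sym path_component_trans
    by blast
  then show ?thesis by (rule path_connected_imp_connected)
qed

end
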